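(* Let $k\geq 2$ and consider the HC model with countable set of spin values $\mathbb Z$ on the Cayley tree $\Gamma^k$, associated with the graph $G$ on $\mathbb Z$ in which every vertex is adjacent to $0$ and no two vertices of $\mathbb Z_0=\mathbb Z\setminus\{0\}$ are adjacent, with activities $\lambda_j>0$. Then: (1) If the series $\sum_{j\in\mathbb Z_0}\lambda_j$ converges, there exists a unique translation-invariant Gibbs measure. (2) If the series $\sum_{j\in\mathbb Z_0}\lambda_j$ diverges, there is no translation-invariant Gibbs measure.
   Context: The Cayley tree $\Gamma^k$ of order $k$ is the infinite tree in which every vertex has exactly $k+1$ neighbours; $V$ is its vertex set. Fix a root $x^0$; for a vertex $x$, $S(x)$ denotes the set of its direct successors (the neighbours of $x$ farther from $x^0$). A configuration is a map $\sigma:V\to\mathbb Z$; it is admissible if $\sigma(x)\sigma(y)=0$ for all nearest neighbours $x,y$ (i.e. $\{\sigma(x),\sigma(y)\}$ is an edge of the graph $G$ above). The HC Hamiltonian is $H(\sigma)=J\sum_{x\in V}\ln\lambda_{\sigma(x)}$ for admissible $\sigma$ and $+\infty$ otherwise, with activities $\lambda_i>0$, $i\in\mathbb Z$. Gibbs measures (tree-indexed Markov chains) of this model are in one-to-one correspondence with normalisable boundary laws; after normalisation at the spin value $0$, boundary laws correspond to families $z_x=(z_{i,x})_{i\in\mathbb Z_0}$ of positive numbers, $x\in V$, satisfying $$z_{i,x}=\lambda_i\prod_{y\in S(x)}\frac{1}{1+\sum_{j\in\mathbb Z_0}z_{j,y}},\qquad i\in\mathbb Z_0 .$$ A translation-invariant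 Gibbs measure is one corresponding to a solution with $z_x=z$ independent of $x$, i.e. to a positive sequence $z=(z_i)_{i\in\mathbb Z_0}$ with $z_i=\lambda_i\bigl(1+\sum_{j\in\mathbb Z_0}z_j\bigr)^{-k}$ for all $i\in\mathbb Z_0$; such a solution is normalisable (hence defines a Gibbs measure) if $\sum_{i}z_i^{(k+1)/k}<\infty$. *)

theory Defs
  imports "HOL-Analysis.Analysis"
begin

text \<open>A translation-invariant (normalised) boundary law of the
  HC model with graph G (every vertex adjacent to 0, no edges inside \<open>\<int>\<^sub>0\<close>) on the Cayley tree of
  order k is a positive family \<open>z = (z_i)_{i \<in> \<int>\<^sub>0}\<close> with
  \<open>z_i = \<lambda>_i (1 + \<Sum>_{j \<in> \<int>\<^sub>0} z_j)^{-k}\<close>. Values of z at 0 are irrelevant.\<close>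

definition Z0 :: "int set" where
  "Z0 = UNIV - {0}"

definition TI_boundary_law :: "nat \<Rightarrow> (int \<Rightarrow> real) \<Rightarrow> (int \<Rightarrow> real) \<Rightarrow> bool" where
  "TI_boundary_law k lam z \<longleftrightarrow>
     (\<forall>i\<in>Z0. z i > 0) \<and> z summable_on Z0 \<and>
     (\<forall>i\<in>Z0. z i = lam i / (1 + infsum z Z0) ^ k)"

definition normalisable :: "nat \<Rightarrow> (int \<Rightarrow> real) \<Rightarrow> bool" where
  "normalisable k z \<longleftrightarrow> (\<lambda>i. z i powr ((real k + 1) / real k)) summable_on Z0"

text \<open>Translation-invariant Gibbs measures are in bijection with normalisable
  translation-invariant boundary laws (identified as functions on \<open>\<int>\<^sub>0\<close>).\<close>
definition TI_Gibbs :: "nat \<Rightarrow> (int \<Rightarrow> real) \<Rightarrow> (int \<Rightarrow> real) \<Rightarrow> bool" where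
  "TI_Gibbs k lam z \<longleftrightarrow> TI_boundary_law k lam z \<and> normalisable k z"

end

theory Submission
  imports Defs
begin

text \<open>Summing the fixed-point equation \<open>z\<^sub>i = \<lambda>\<^sub>i (1 + S)\<^sup>-\<^sup>k\<close> over \<open>\<int>\<^sub>0\<close> shows that
  \<open>S = \<Sum>\<^sub>j z\<^sub>j\<close> solves \<open>S (1 + S)\<^sup>k = \<Sum>\<^sub>j \<lambda>\<^sub>j\<close>, so a boundary law can only exist when
  \<open>\<Sum>\<^sub>j \<lambda>\<^sub>j\<close> is finite. Conversely, \<open>s \<mapsto> s (1 + s)\<^sup>k\<close> increases strictly from \<open>0\<close> to \<open>\<infinity>\<close>
  on \<open>[0, \<infinity>)\<close>, so the equation has exactly one solution \<open>S\<close>, and \<open>z = \<lambda> / (1 + S)\<^sup>k\<close>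
  is the only boundary law. Normalisability is automatic: \<open>z\<^sub>i \<le> S\<close> gives
  \<open>z\<^sub>i\<^sup>1\<^sup>+\<^sup>1\<^sup>/\<^sup>k \<le> S\<^sup>1\<^sup>/\<^sup>k z\<^sub>i\<close>.\<close>

lemma summable_on_powr_of_nonneg:
  fixes z :: "'a \<Rightarrow> real"
  assumes nonneg: "\<And>i. i \<in> A \<Longrightarrow> 0 \<le> z i" and sum: "z summable_on A" and p: "1 \<le> p"
  shows "(\<lambda>i. z i powr p) summable_on A"
proof (rule summable_on_comparison_test)
  define C where "C = infsum z A"
  show "(\<lambda>i. z i * C powr (p - 1)) summable_on A"
    using sum by (rule summable_on_cmult_left)
  fix i assume i: "i \<in> A"
  have "infsum z {i} \<le> infsum z A"
    by (rule infsum_mono_neutral) (use i nonneg sum in auto)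
  then have le_C: "z i \<le> C" by (simp add: C_def)
  show "0 \<le> z i powr p" by simp
  show "z i powr p \<le> z i * C powr (p - 1)"
  proof (cases "z i = 0")
    case False
    have "z i powr p = z i powr (1 + (p - 1))"
      by simp
    also have "\<dots> = z i powr 1 * z i powr (p - 1)"
      by (rule powr_add)
    also have "\<dots> = z i * z i powr (p - 1)"
      using nonneg[OF i] False by simp
    also have "\<dots> \<le> z i * C powr (p - 1)"
      using nonneg[OF i] le_C p by (intro mult_left_mono powr_mono2) auto
    finally show ?thesis .
  qed simp
qed

lemma strict_mono_on_times_one_plus_power:
  "strict_mono_on {0..} (\<lambda>s::real. s * (1 + s) ^ k)"
proof (rule strict_mono_onI)
  fix s t :: real assume "s \<in> {0..}" "s < t"
  then have "s * (1 + s) ^ k \<le> s * (1 + t) ^ k"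
    by (intro mult_left_mono power_mono) auto
  also have "\<dots> < t * (1 + t) ^ k"
    using \<open>s \<in> {0..}\<close> \<open>s < t\<close> by (intro mult_strict_right_mono) auto
  finally show "s * (1 + s) ^ k < t * (1 + t) ^ k" .
qed

lemma ex_times_one_plus_power_eq:
  fixes L :: real
  assumes "0 \<le> L"
  shows "\<exists>s\<ge>0. s * (1 + s) ^ k = L"
proof -
  have "L * 1 \<le> L * (1 + L) ^ k"
    using assms by (intro mult_left_mono) auto
  then have "\<exists>s. 0 \<le> s \<and> s \<le> L \<and> s * (1 + s) ^ k = L"
    using assms by (intro IVT') (auto intro!: continuous_intros)
  then show ?thesis by blast
qed

lemma TI_boundary_law_infsum_nonneg:
  assumes "TI_boundary_law k lam z"
  shows "0 \<le> infsum z Z0"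
  using assms unfolding TI_boundary_law_def by (intro infsum_nonneg) (auto intro: less_imp_le)

lemma TI_boundary_law_has_sum:
  assumes "TI_boundary_law k lam z"
  shows "(lam has_sum infsum z Z0 * (1 + infsum z Z0) ^ k) Z0"
proof -
  define S where "S = infsum z Z0"
  have "S \<ge> 0"
    using assms unfolding S_def by (rule TI_boundary_law_infsum_nonneg)
  then have lam_eq: "lam i = z i * (1 + S) ^ k" if "i \<in> Z0" for i
    using assms that unfolding TI_boundary_law_def S_def by simp
  have "((\<lambda>i. z i * (1 + S) ^ k) has_sum S * (1 + S) ^ k) Z0"
    using assms unfolding TI_boundary_law_def S_def
    by (intro has_sum_cmult_left) (simp add: summable_iff_has_sum_infsum)
  then show ?thesis
    unfolding S_def[symmetric] by (rule has_sum_cong[THEN iffD1, rotated]) (simp add: lam_eq)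
qed

lemma TI_boundary_law_unique:
  assumes "TI_boundary_law k lam z" and "TI_boundary_law k lam z'" and "i \<in> Z0"
  shows "z' i = z i"
proof -
  have "infsum z Z0 * (1 + infsum z Z0) ^ k = infsum z' Z0 * (1 + infsum z' Z0) ^ k"
    using has_sum_unique TI_boundary_law_has_sum assms(1,2) by blast
  moreover have "infsum z Z0 \<in> {0..}" "infsum z' Z0 \<in> {0..}"
    using assms(1,2) by (simp_all add: TI_boundary_law_infsum_nonneg)
  ultimately have "infsum z' Z0 = infsum z Z0"
    by (rule strict_mono_on_eqD[OF strict_mono_on_times_one_plus_power])
  then show ?thesis
    using assms unfolding TI_boundary_law_def by simp
qed

lemma TI_boundary_law_exists:
  assumes sum: "lam summable_on Z0" and pos: "\<And>i. i \<in> Z0 \<Longrightarrow> lam i > 0"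
  shows "\<exists>z. TI_boundary_law k lam z"
proof -
  have "0 \<le> infsum lam Z0"
    using pos by (intro infsum_nonneg) (simp add: less_imp_le)
  then obtain S :: real where "S \<ge> 0" and S: "S * (1 + S) ^ k = infsum lam Z0"
    using ex_times_one_plus_power_eq by blast
  define z where "z i = lam i * (1 / (1 + S) ^ k)" for i
  have "(z has_sum infsum lam Z0 * (1 / (1 + S) ^ k)) Z0"
    unfolding z_def using sum by (intro has_sum_cmult_left) (simp add: summable_iff_has_sum_infsum)
  moreover have "infsum lam Z0 * (1 / (1 + S) ^ k) = S"
    using \<open>S \<ge> 0\<close> by (simp flip: S)
  ultimately have "(z has_sum S) Z0" by simp
  then have "TI_boundary_law k lam z"
    using pos \<open>S \<ge> 0\<close> unfolding TI_boundary_law_def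
    by (auto simp: has_sum_iff z_def)
  then show ?thesis by blast
qed

lemma TI_boundary_law_normalisable:
  assumes "k \<ge> 1" and "TI_boundary_law k lam z"
  shows "normalisable k z"
  unfolding normalisable_def
  using assms by (intro summable_on_powr_of_nonneg) (auto simp: TI_boundary_law_def less_imp_le)

theorem mainTheorem1:
  fixes k :: nat and lam :: "int \<Rightarrow> real"
  assumes "k \<ge> 2"
    and "\<And>j. lam j > 0"
  shows "(lam summable_on Z0 \<longrightarrow>
            (\<exists>z. TI_Gibbs k lam z \<and>
                 (\<forall>z'. TI_Gibbs k lam z' \<longrightarrow> (\<forall>i\<in>Z0. z' i = z i))))
       \<and> (\<not> lam summable_on Z0 \<longrightarrow> \<not> (\<exists>z. TI_Gibbs k lam z))"
proof (intro conjI impI)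
  assume "lam summable_on Z0"
  then obtain z where z: "TI_boundary_law k lam z"
    using TI_boundary_law_exists assms(2) by blast
  then have "TI_Gibbs k lam z"
    using TI_boundary_law_normalisable assms(1) by (simp add: TI_Gibbs_def)
  moreover have "\<forall>z'. TI_Gibbs k lam z' \<longrightarrow> (\<forall>i\<in>Z0. z' i = z i)"
    using TI_boundary_law_unique z by (auto simp: TI_Gibbs_def)
  ultimately show "\<exists>z. TI_Gibbs k lam z \<and> (\<forall>z'. TI_Gibbs k lam z' \<longrightarrow> (\<forall>i\<in>Z0. z' i = z i))"
    by blast
next
  assume "\<not> lam summable_on Z0"
  then show "\<not> (\<exists>z. TI_Gibbs k lam z)"
    using TI_boundary_law_has_sum has_sum_imp_summable unfolding TI_Gibbs_def by blast
qed

end
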